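(* Let $2\le n\le l$ be integers and let $L_l=\{a_1<\dots<a_l\}$ be the linearly ordered semilattice of $l$ elements. Let $Eq(n)$ be the set of equations in the variables $X=\{x_1,\dots,x_n\}$, where an equation $t(X)=s(X)$ is identified with the ordered pair $(\mathrm{Var}(t),\mathrm{Var}(s))$ of nonempty subsets of $X$ with $\mathrm{Var}(t)\cup\mathrm{Var}(s)=X$ (so $|Eq(n)|=3^n-2$). For each equation let $\mathrm{Irr}$ denote the number of irreducible components of its solution set in $L_l^n$. Then the average of $\mathrm{Irr}$ over $Eq(n)$ is $$\overline{\mathrm{Irr}}(n)=\frac{4\,n!\,3^{n-2}}{3^n-2},$$ in particular $\overline{\mathrm{Irr}}(n)\sim \frac{4}{9}n!$ as $n\to\infty$; this value does not depend on $l$.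
   Context: $L_l$ has multiplication $a_ia_j=a_{\min(i,j)}$. A term is a commutative word in $x_1,\dots,x_n$; $\mathrm{Var}(t)$ is the set of variables occurring in $t$; the solution set of $t(X)=s(X)$ depends only on $\mathrm{Var}(t)$ and $\mathrm{Var}(s)$. Equations are ordered pairs, so $t=s$ and $s=t$ are counted as different equations. $P\in L_l^n$ is a solution if $t(P)=s(P)$. For a system $S$, $V(S)$ is its set of common solutions; $Y\subseteq L_l^n$ is algebraic if $Y=V(S)$ for some system $S$; an algebraic set is irreducible if it is not a proper finite union of other algebraic sets. Every algebraic set is uniquely (up to order) a finite union $Y_1\cup\dots\cup Y_m$ of irreducible algebraic sets with $Y_i\not\subseteq Y_j$ for $i\ne j$; these are its irreducible components. *)

theory Defs
  imports Main Complex_Main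
begin

text \<open>The semilattice L_l is modelled by the carrier {1..l} of nat with meet = min
  (a_i a_j = a_(min i j)).  Variables x_1..x_n are indices 0..n-1; a point of L_l^n is a
  list of length n with entries in {1..l}.  A term is determined (for solution sets) by its
  nonempty variable set T, and its value at P is the product = Min of the coordinates in T.\<close>

definition pts :: "nat \<Rightarrow> nat \<Rightarrow> nat list set" where
  "pts l n = {P. length P = n \<and> set P \<subseteq> {1..l}}"

definition tval :: "nat list \<Rightarrow> nat set \<Rightarrow> nat" where
  "tval P T = Min ((\<lambda>i. P ! i) ` T)"

definition alleqs :: "nat \<Rightarrow> (nat set \<times> nat set) set" where
  "alleqs n = {(T, S). T \<noteq> {} \<and> S \<noteq> {} \<and> T \<subseteq> {..<n} \<and> S \<subseteq> {..<n}}"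

definition Vsys :: "nat \<Rightarrow> nat \<Rightarrow> (nat set \<times> nat set) set \<Rightarrow> nat list set" where
  "Vsys l n Sys = {P \<in> pts l n. \<forall>(T, S) \<in> Sys. tval P T = tval P S}"

definition algebraic :: "nat \<Rightarrow> nat \<Rightarrow> nat list set \<Rightarrow> bool" where
  "algebraic l n Y \<longleftrightarrow> (\<exists>Sys \<subseteq> alleqs n. Y = Vsys l n Sys)"

definition irreducible_alg :: "nat \<Rightarrow> nat \<Rightarrow> nat list set \<Rightarrow> bool" where
  "irreducible_alg l n Y \<longleftrightarrow> algebraic l n Y \<and>
     (\<forall>F. finite F \<and> (\<forall>Z\<in>F. algebraic l n Z) \<and> Y = \<Union>F \<longrightarrow> Y \<in> F)"

definition irr_components :: "nat \<Rightarrow> nat \<Rightarrow> nat list set \<Rightarrow> nat list set set" where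
  "irr_components l n Y = (THE C. finite C \<and> (\<forall>Z\<in>C. irreducible_alg l n Z) \<and> \<Union>C = Y \<and>
      (\<forall>Z1\<in>C. \<forall>Z2\<in>C. Z1 \<noteq> Z2 \<longrightarrow> \<not> Z1 \<subseteq> Z2))"

definition Irr :: "nat \<Rightarrow> nat \<Rightarrow> nat list set \<Rightarrow> nat" where
  "Irr l n Y = card (irr_components l n Y)"

definition Eqn :: "nat \<Rightarrow> (nat set \<times> nat set) set" where
  "Eqn n = {(T, S). (T, S) \<in> alleqs n \<and> T \<union> S = {..<n}}"

end

theory Submission
  imports Defs "HOL-Combinatorics.Permutations" "HOL-Library.Product_Lexorder"
begin

text \<open>A rank function \<rho> on the variables determines the cone of points whose coordinates are
  ordered like \<rho>. Cones are algebraic, and irreducible as soon as they contain the generic point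
  with coordinates \<rho> i + 1, which is where n \<le> l is needed. A point solves T = S with
  T \<union> S = X iff its least coordinate is attained in T \<inter> S, or attained both at some
  i \<in> T - S and at some j \<in> S - T. Hence the solution set is the union of the cones of the
  linear orders whose least element lies in T \<inter> S, and of the linear orders whose two least
  elements lie in T - S and S - T, with these two elements merged. Distinct such rank functions
  give incomparable cones, so these cones are the irreducible components, and there are
  |T \<inter> S| (n-1)! + |T - S| |S - T| (n-2)! of them. Encoding an equation by the word over
  {0, 1, 2} recording whether each variable lies in T only, S only, or both, the sum over all
  equations is n 3^(n-1) (n-1)! + n (n-1) 3^(n-2) (n-2)! = 4 n! 3^(n-2).\<close>

section \<open>Cones of rank functions\<close>

definition cone :: "nat \<Rightarrow> nat \<Rightarrow> (nat \<Rightarrow> nat) \<Rightarrow> nat list set" where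
  "cone l n \<rho> = {P \<in> pts l n. \<forall>i<n. \<forall>j<n. \<rho> i \<le> \<rho> j \<longrightarrow> P ! i \<le> P ! j}"

definition generic_point :: "nat \<Rightarrow> (nat \<Rightarrow> nat) \<Rightarrow> nat list" where
  "generic_point n \<rho> = map (\<lambda>i. Suc (\<rho> i)) [0..<n]"

definition coarser :: "nat \<Rightarrow> (nat \<Rightarrow> nat) \<Rightarrow> (nat \<Rightarrow> nat) \<Rightarrow> bool" where
  "coarser n \<rho> \<rho>' \<longleftrightarrow> (\<forall>i<n. \<forall>j<n. \<rho>' i \<le> \<rho>' j \<longrightarrow> \<rho> i \<le> \<rho> j)"

lemma tval_eq_nth:
  assumes "finite T" "t \<in> T" "\<And>x. x \<in> T \<Longrightarrow> P ! t \<le> P ! x"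
  shows "tval P T = P ! t"
  unfolding tval_def using assms by (intro Min_eqI) auto

lemma tval_cone:
  assumes "P \<in> cone l n \<rho>" "T \<subseteq> {..<n}" "t \<in> T" "\<And>x. x \<in> T \<Longrightarrow> \<rho> t \<le> \<rho> x"
  shows "tval P T = P ! t"
  using assms by (intro tval_eq_nth) (auto simp: cone_def intro: finite_subset)

lemma obtain_argmin:
  fixes \<rho> :: "'a \<Rightarrow> nat"
  assumes "T \<noteq> {}"
  obtains t where "t \<in> T" "\<And>x. x \<in> T \<Longrightarrow> \<rho> t \<le> \<rho> x"
  using ex_has_least_nat[of "\<lambda>x. x \<in> T" _ \<rho>] assms by blast

lemma algebraic_cone: "algebraic l n (cone l n \<rho>)"
proof -
  define Sys where "Sys = {({i}, {i, j}) | i j. i < n \<and> j < n \<and> \<rho> i \<le> \<rho> j}"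
  have "tval P {i} = tval P {i, j} \<longleftrightarrow> P ! i \<le> P ! j" for P i j
    by (auto simp: tval_def min_def)
  then have "cone l n \<rho> = Vsys l n Sys"
    unfolding cone_def Vsys_def Sys_def by blast
  moreover have "Sys \<subseteq> alleqs n"
    by (auto simp: alleqs_def Sys_def)
  ultimately show ?thesis
    unfolding algebraic_def by blast
qed

lemma algebraic_subset_pts: "algebraic l n Y \<Longrightarrow> Y \<subseteq> pts l n"
  by (auto simp: algebraic_def Vsys_def)

lemma irreducible_algI_generic:
  assumes alg: "algebraic l n Y" and "g \<in> Y"
    and generic: "\<And>T S Q. (T, S) \<in> alleqs n \<Longrightarrow> tval g T = tval g S \<Longrightarrow> Q \<in> Y \<Longrightarrow> tval Q T = tval Q S"
  shows "irreducible_alg l n Y"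
  unfolding irreducible_alg_def
proof (intro conjI allI impI alg)
  fix F assume F: "finite F \<and> (\<forall>Z\<in>F. algebraic l n Z) \<and> Y = \<Union>F"
  then obtain Z where Z: "Z \<in> F" "g \<in> Z"
    using \<open>g \<in> Y\<close> by auto
  then obtain Sys where Sys: "Sys \<subseteq> alleqs n" "Z = Vsys l n Sys"
    using F unfolding algebraic_def by auto
  have "Y \<subseteq> Z"
  proof
    fix Q assume "Q \<in> Y"
    have "tval Q T = tval Q S" if "(T, S) \<in> Sys" for T S
    proof (rule generic[OF _ _ \<open>Q \<in> Y\<close>])
      show "(T, S) \<in> alleqs n"
        using that Sys(1) by auto
      show "tval g T = tval g S"
        using \<open>g \<in> Z\<close> that unfolding Sys(2) Vsys_def by auto
    qed
    moreover have "Q \<in> pts l n"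
      using algebraic_subset_pts[OF alg] \<open>Q \<in> Y\<close> by auto
    ultimately show "Q \<in> Z"
      unfolding Sys(2) Vsys_def by auto
  qed
  moreover have "Z \<subseteq> Y"
    using F Z(1) by auto
  ultimately show "Y \<in> F"
    using Z(1) by auto
qed

lemma generic_point_in_cone:
  assumes "\<forall>i<n. \<rho> i < l"
  shows "generic_point n \<rho> \<in> cone l n \<rho>"
proof -
  have "generic_point n \<rho> \<in> pts l n"
    using assms unfolding pts_def generic_point_def by (auto simp: Suc_le_eq)
  then show ?thesis
    by (simp add: cone_def generic_point_def)
qed

lemma irreducible_alg_cone:
  assumes "\<forall>i<n. \<rho> i < l"
  shows "irreducible_alg l n (cone l n \<rho>)"
proof (rule irreducible_algI_generic[OF algebraic_cone generic_point_in_cone[OF assms]])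
  fix T S Q
  assume TS: "(T, S) \<in> alleqs n" and g: "tval (generic_point n \<rho>) T = tval (generic_point n \<rho>) S"
    and Q: "Q \<in> cone l n \<rho>"
  have sub: "T \<subseteq> {..<n}" "S \<subseteq> {..<n}" and ne: "T \<noteq> {}" "S \<noteq> {}"
    using TS by (auto simp: alleqs_def)
  obtain t where t: "t \<in> T" "\<And>x. x \<in> T \<Longrightarrow> \<rho> t \<le> \<rho> x"
    using obtain_argmin[OF ne(1)] by blast
  obtain s where s: "s \<in> S" "\<And>x. x \<in> S \<Longrightarrow> \<rho> s \<le> \<rho> x"
    using obtain_argmin[OF ne(2)] by blast
  have "t < n" "s < n"
    using t(1) s(1) sub by auto
  then have "\<rho> t = \<rho> s"
    using g tval_cone[OF generic_point_in_cone[OF assms] sub(1) t]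
      tval_cone[OF generic_point_in_cone[OF assms] sub(2) s]
    by (simp add: generic_point_def)
  then have "Q ! t = Q ! s"
    using Q \<open>t < n\<close> \<open>s < n\<close> unfolding cone_def by (auto intro: order.antisym)
  then show "tval Q T = tval Q S"
    using tval_cone[OF Q sub(1) t] tval_cone[OF Q sub(2) s] by simp
qed

lemma cone_subset_cone_iff:
  assumes "\<forall>i<n. \<rho> i < l"
  shows "cone l n \<rho> \<subseteq> cone l n \<rho>' \<longleftrightarrow> coarser n \<rho> \<rho>'"
proof
  assume "cone l n \<rho> \<subseteq> cone l n \<rho>'"
  then have "generic_point n \<rho> \<in> cone l n \<rho>'"
    using generic_point_in_cone[OF assms] by blast
  then show "coarser n \<rho> \<rho>'"
    by (auto simp: coarser_def cone_def generic_point_def)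
next
  assume "coarser n \<rho> \<rho>'"
  then show "cone l n \<rho> \<subseteq> cone l n \<rho>'"
    by (auto simp: coarser_def cone_def)
qed

section \<open>The components of a single equation\<close>

definition merge_bottom :: "(nat \<Rightarrow> nat) \<Rightarrow> nat \<Rightarrow> nat" where
  "merge_bottom p i = max (p i) 1"

lemma permutes_lessThan_less: "p permutes {..<n} \<Longrightarrow> i < n \<Longrightarrow> p i < n"
  using permutes_in_image by fastforce

lemma permutes_eq_iff: "p permutes S \<Longrightarrow> p a = p b \<longleftrightarrow> a = b"
  using permutes_inj by (metis injD)

lemma card_less_permutes:
  assumes p: "p permutes {..<n}" and "i < n"
  shows "card {j \<in> {..<n}. p j < p i} = p i"
proof -
  have "p ` {j \<in> {..<n}. p j < p i} = {..<p i}"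
  proof
    show "{..<p i} \<subseteq> p ` {j \<in> {..<n}. p j < p i}"
    proof
      fix v assume v: "v \<in> {..<p i}"
      then have "v \<in> p ` {..<n}"
        using permutes_lessThan_less[OF p \<open>i < n\<close>] permutes_image[OF p] by auto
      then show "v \<in> p ` {j \<in> {..<n}. p j < p i}"
        using v by auto
    qed
  qed auto
  moreover have "inj_on p {j \<in> {..<n}. p j < p i}"
    using permutes_inj[OF p] by (auto intro: inj_on_subset)
  ultimately show ?thesis
    using card_image by fastforce
qed

text \<open>A permutation is the rank function of the linear order it induces, so two permutations
  inducing comparable orders coincide.\<close>
lemma permutes_eq_if_coarser:
  assumes p: "p permutes {..<n}" and q: "q permutes {..<n}" and "coarser n p q"
  shows "p = q"
proof -
  have le: "p i \<le> q i" if "i \<in> {..<n}" for i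
  proof -
    have "{j \<in> {..<n}. p j < p i} \<subseteq> {j \<in> {..<n}. q j < q i}"
      using \<open>coarser n p q\<close> that unfolding coarser_def by (auto simp: not_less[symmetric])
    then have "card {j \<in> {..<n}. p j < p i} \<le> card {j \<in> {..<n}. q j < q i}"
      by (intro card_mono) auto
    then show ?thesis
      using card_less_permutes[OF p] card_less_permutes[OF q] that by simp
  qed
  have sums: "sum p {..<n} = sum q {..<n}"
    using sum.reindex_bij_betw[OF permutes_imp_bij[OF p], of id]
      sum.reindex_bij_betw[OF permutes_imp_bij[OF q], of id] by simp
  have "p i = q i" if "i < n" for i
    using sum_mono_inv[OF sums le, of i] that by simp
  moreover have "p i = q i" if "\<not> i < n" for i
    using permutes_not_in[OF p] permutes_not_in[OF q] that by auto
  ultimately show ?thesis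
    by (metis ext)
qed

lemma permutes_le_one_cases:
  fixes p :: "nat \<Rightarrow> nat"
  assumes "p permutes X" "p i = 0" "p j = 1" "p x \<le> 1"
  shows "x = i \<or> x = j"
proof -
  have "p x = p i \<or> p x = p j"
    using assms(2-4) by auto
  then show ?thesis
    using permutes_eq_iff[OF assms(1)] by simp
qed

lemma cone_merge_bottom:
  assumes p: "p permutes {..<n}" and ij: "i < n" "j < n" "p i = 0" "p j = 1"
  shows "cone l n (merge_bottom p) = {P \<in> cone l n p. P ! i = P ! j}"
proof -
  have bottom: "x = i \<or> x = j" if "p x \<le> 1" for x
    using permutes_le_one_cases[OF p ij(3,4) that] .
  have "merge_bottom p x \<le> merge_bottom p y \<longleftrightarrow> p x \<le> p y \<or> {x, y} \<subseteq> {i, j}" for x y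
    using bottom ij(3,4) unfolding merge_bottom_def by (cases "p x \<le> 1"; cases "p y \<le> 1") auto
  then show ?thesis
    using ij(1,2) unfolding cone_def by (auto intro: order.antisym)
qed

definition common_bottom_perms :: "nat \<Rightarrow> nat set \<Rightarrow> nat set \<Rightarrow> (nat \<Rightarrow> nat) set" where
  "common_bottom_perms n T S = {p. p permutes {..<n} \<and> (\<exists>k\<in>T \<inter> S. p k = 0)}"

definition split_bottom_perms :: "nat \<Rightarrow> nat set \<Rightarrow> nat set \<Rightarrow> (nat \<Rightarrow> nat) set" where
  "split_bottom_perms n T S =
     {p. p permutes {..<n} \<and> (\<exists>i\<in>T - S. \<exists>j\<in>S - T. p i = 0 \<and> p j = 1)}"

text \<open>The cones of these rank functions are the irreducible components of V(T = S).\<close>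
definition component_ranks :: "nat \<Rightarrow> nat set \<Rightarrow> nat set \<Rightarrow> (nat \<Rightarrow> nat) set" where
  "component_ranks n T S = common_bottom_perms n T S \<union> merge_bottom ` split_bottom_perms n T S"

lemma finite_component_ranks:
  "finite (common_bottom_perms n T S)" "finite (split_bottom_perms n T S)"
  "finite (component_ranks n T S)"
proof -
  show fin: "finite (common_bottom_perms n T S)" "finite (split_bottom_perms n T S)"
    unfolding common_bottom_perms_def split_bottom_perms_def
    by (auto intro: finite_subset[OF _ finite_permutations[of "{..<n}"]])
  then show "finite (component_ranks n T S)"
    by (simp add: component_ranks_def)
qed

lemma coarser_refl: "coarser n \<rho> \<rho>"
  by (simp add: coarser_def)

lemma not_coarser_perm_merge_bottom:
  assumes p: "p permutes {..<n}" and "i < n" "j < n" "i \<noteq> j" "q i = 0" "q j = 1"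
  shows "\<not> coarser n p (merge_bottom q)"
proof
  assume coarser: "coarser n p (merge_bottom q)"
  have "merge_bottom q i = merge_bottom q j"
    using assms by (simp add: merge_bottom_def)
  then have "p i \<le> p j" "p j \<le> p i"
    using coarser \<open>i < n\<close> \<open>j < n\<close> unfolding coarser_def by simp_all
  then have "p i = p j"
    by simp
  then show False
    using permutes_eq_iff[OF p] \<open>i \<noteq> j\<close> by blast
qed

lemma not_coarser_merge_bottom_common:
  assumes "p \<in> split_bottom_perms n T S" "q \<in> common_bottom_perms n T S"
    and "T \<subseteq> {..<n}" "S \<subseteq> {..<n}"
  shows "\<not> coarser n (merge_bottom p) q"
proof
  assume coarser: "coarser n (merge_bottom p) q"
  obtain i j where p: "p permutes {..<n}" "i \<in> T - S" "j \<in> S - T" "p i = 0" "p j = 1"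
    using assms(1) unfolding split_bottom_perms_def by blast
  obtain k where q: "k \<in> T \<inter> S" "q k = 0"
    using assms(2) unfolding common_bottom_perms_def by blast
  have "k < n" "i < n"
    using q(1) p(2) assms(3) by auto
  then have "merge_bottom p k \<le> merge_bottom p i"
    using coarser q(2) unfolding coarser_def by simp
  then have "p k \<le> 1"
    using p(4) by (simp add: merge_bottom_def)
  then have "k = i \<or> k = j"
    using permutes_le_one_cases[OF p(1,4,5)] by simp
  then show False
    using p(2,3) q(1) by auto
qed

lemma coarser_if_coarser_merge_bottom:
  assumes p: "p permutes {..<n}" and coarser: "coarser n (merge_bottom p) (merge_bottom q)"
    and "p i = 0" "p j = 1" "q i = 0" "q j = 1"
  shows "coarser n p q"
  unfolding coarser_def
proof (intro allI impI)
  fix x y assume xy: "x < n" "y < n" "q x \<le> q y"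
  then have merged: "merge_bottom p x \<le> merge_bottom p y"
    using coarser unfolding coarser_def merge_bottom_def by (meson max.mono order.refl)
  show "p x \<le> p y"
  proof (rule ccontr)
    assume "\<not> p x \<le> p y"
    then have "p y = p i" "p x = p j"
      using merged \<open>p i = 0\<close> \<open>p j = 1\<close> unfolding merge_bottom_def by auto
    then have "y = i" "x = j"
      using permutes_eq_iff[OF p] by simp_all
    then show False
      using xy(3) \<open>q i = 0\<close> \<open>q j = 1\<close> by simp
  qed
qed

lemma split_bottom_perms_eq_if_coarser:
  assumes "p \<in> split_bottom_perms n T S" "q \<in> split_bottom_perms n T S"
    and "T \<subseteq> {..<n}" "S \<subseteq> {..<n}"
    and coarser: "coarser n (merge_bottom p) (merge_bottom q)"
  shows "p = q"
proof -
  obtain i j where p: "p permutes {..<n}" "i \<in> T - S" "j \<in> S - T" "p i = 0" "p j = 1"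
    using assms(1) unfolding split_bottom_perms_def by blast
  obtain i' j' where q: "q permutes {..<n}" "i' \<in> T - S" "j' \<in> S - T" "q i' = 0" "q j' = 1"
    using assms(2) unfolding split_bottom_perms_def by blast
  have "i' < n" "j' < n"
    using q assms(3,4) by auto
  have "merge_bottom q i' = merge_bottom q j'"
    using q(4,5) by (simp add: merge_bottom_def)
  then have "merge_bottom p i' \<le> merge_bottom p j'" "merge_bottom p j' \<le> merge_bottom p i'"
    using coarser \<open>i' < n\<close> \<open>j' < n\<close> unfolding coarser_def by simp_all
  moreover have "p i' \<noteq> p j'"
    using q(2,3) by (auto simp: permutes_eq_iff[OF p(1)])
  ultimately have "p i' \<le> 1" "p j' \<le> 1"
    unfolding merge_bottom_def by (metis max_def nle_le)+
  then have "i' = i" "j' = j"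
    using permutes_le_one_cases[OF p(1,4,5)] p(2,3) q(2,3) by blast+
  then have "coarser n p q"
    using coarser_if_coarser_merge_bottom[OF p(1) coarser p(4,5)] q(4,5) by simp
  then show "p = q"
    using permutes_eq_if_coarser p(1) q(1) by simp
qed

lemma component_ranks_eq_if_coarser:
  assumes "\<rho> \<in> component_ranks n T S" "\<rho>' \<in> component_ranks n T S"
    and TS: "T \<subseteq> {..<n}" "S \<subseteq> {..<n}" and "coarser n \<rho> \<rho>'"
  shows "\<rho> = \<rho>'"
  using assms(1,2)
  unfolding component_ranks_def
proof (elim UnE imageE)
  fix q assume "\<rho> \<in> common_bottom_perms n T S" "\<rho>' = merge_bottom q"
    "q \<in> split_bottom_perms n T S"
  moreover obtain i j where "i \<in> T - S" "j \<in> S - T" "q i = 0" "q j = 1"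
    using \<open>q \<in> split_bottom_perms n T S\<close> unfolding split_bottom_perms_def by blast
  ultimately show ?thesis
    using not_coarser_perm_merge_bottom[of \<rho> n i j q] \<open>coarser n \<rho> \<rho>'\<close> TS
    unfolding common_bottom_perms_def by auto
next
  fix p assume "\<rho> = merge_bottom p" "p \<in> split_bottom_perms n T S"
    "\<rho>' \<in> common_bottom_perms n T S"
  then show ?thesis
    using not_coarser_merge_bottom_common TS \<open>coarser n \<rho> \<rho>'\<close> by blast
next
  fix p q assume "\<rho> = merge_bottom p" "p \<in> split_bottom_perms n T S"
    "\<rho>' = merge_bottom q" "q \<in> split_bottom_perms n T S"
  then show ?thesis
    using split_bottom_perms_eq_if_coarser TS \<open>coarser n \<rho> \<rho>'\<close> by blast
next
  assume "\<rho> \<in> common_bottom_perms n T S" "\<rho>' \<in> common_bottom_perms n T S"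
  then show ?thesis
    using permutes_eq_if_coarser \<open>coarser n \<rho> \<rho>'\<close> unfolding common_bottom_perms_def by blast
qed

lemma component_ranks_less:
  assumes "\<rho> \<in> component_ranks n T S" "2 \<le> n" "n \<le> l"
  shows "\<forall>i<n. \<rho> i < l"
proof (intro allI impI)
  fix i assume "i < n"
  then have "\<rho> i < n"
    using assms(1,2) permutes_lessThan_less
    unfolding component_ranks_def common_bottom_perms_def split_bottom_perms_def merge_bottom_def
    by fastforce
  then show "\<rho> i < l"
    using assms(3) by simp
qed

lemma ranking_permutation:
  fixes key :: "nat \<Rightarrow> 'a::linorder"
  assumes inj: "inj_on key {..<n}"
  obtains r where "r permutes {..<n}"
    "\<And>x y. x < n \<Longrightarrow> y < n \<Longrightarrow> r x \<le> r y \<longleftrightarrow> key x \<le> key y"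
    "\<And>x. x < n \<Longrightarrow> r x = card {y \<in> {..<n}. key y < key x}"
proof -
  define r where "r x = (if x < n then card {y \<in> {..<n}. key y < key x} else x)" for x
  have strict: "r x < r y" if "x < n" "y < n" "key x < key y" for x y
  proof -
    have "{z \<in> {..<n}. key z < key x} \<subset> {z \<in> {..<n}. key z < key y}"
      using that by auto
    then show ?thesis
      using that by (simp add: r_def psubset_card_mono)
  qed
  have mono: "r x \<le> r y \<longleftrightarrow> key x \<le> key y" if "x < n" "y < n" for x y
  proof (cases "key x = key y")
    case True
    then show ?thesis
      using inj that by (auto dest: inj_onD)
  next
    case False
    then have "key x < key y \<or> key y < key x"
      by auto
    then show ?thesis
      using strict[OF that] strict[OF that(2,1)] by auto
  qed
  have "r x < n" if "x < n" for x
  proof -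
    have "{z \<in> {..<n}. key z < key x} \<subset> {..<n}"
      using that by auto
    then have "card {z \<in> {..<n}. key z < key x} < card {..<n::nat}"
      by (rule psubset_card_mono[rotated]) simp
    then show ?thesis
      using that by (simp add: r_def)
  qed
  moreover have "inj_on r {..<n}"
  proof (rule inj_onI)
    fix x y assume "x \<in> {..<n}" "y \<in> {..<n}" "r x = r y"
    then have "key x = key y"
      using mono by (simp add: order.eq_iff)
    then show "x = y"
      using inj_onD[OF inj] \<open>x \<in> {..<n}\<close> \<open>y \<in> {..<n}\<close> by blast
  qed
  ultimately have "bij_betw r {..<n} {..<n}"
    using endo_inj_surj[of "{..<n}" r] by (auto simp: bij_betw_def)
  then have "r permutes {..<n}"
    by (rule bij_imp_permutes) (simp add: r_def)
  then show ?thesis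
    using that mono by (simp add: r_def)
qed

lemma sorting_permutation:
  fixes Q :: "nat list"
  assumes "i < n" "j < n" and min: "\<And>x. x < n \<Longrightarrow> Q ! i \<le> Q ! x" and "Q ! j = Q ! i"
  obtains r where "r permutes {..<n}" "\<And>x y. x < n \<Longrightarrow> y < n \<Longrightarrow> r x \<le> r y \<Longrightarrow> Q ! x \<le> Q ! y"
    "r i = 0" "i \<noteq> j \<Longrightarrow> r j = 1"
proof -
  define c where "c x = (if x = i then 0 else if x = j then 1 else Suc (Suc x))" for x :: nat
  define key where "key x = (Q ! x, c x)" for x
  have "inj c"
    by (intro injI) (simp add: c_def split: if_splits)
  then have inj_key: "inj_on key {..<n}"
    by (intro inj_onI) (simp add: key_def inj_eq)
  obtain r where r: "r permutes {..<n}"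
    "\<And>x y. x < n \<Longrightarrow> y < n \<Longrightarrow> r x \<le> r y \<longleftrightarrow> key x \<le> key y"
    "\<And>x. x < n \<Longrightarrow> r x = card {y \<in> {..<n}. key y < key x}"
    using ranking_permutation[OF inj_key] by blast
  have "Q ! x \<le> Q ! y" if "x < n" "y < n" "r x \<le> r y" for x y
    using r(2)[OF that(1,2)] that(3) by (auto simp: key_def)
  moreover have "\<not> key y < key i" if "y < n" for y
    using min[OF that] by (simp add: key_def c_def not_less)
  then have "r i = 0"
    using r(3)[OF \<open>i < n\<close>] by simp
  moreover have "r j = 1" if "i \<noteq> j"
  proof -
    have "key y < key j \<longleftrightarrow> y = i" if "y < n" for y
    proof -
      have "c y = 0 \<longleftrightarrow> y = i" "c j = 1"
        using \<open>i \<noteq> j\<close> by (simp_all add: c_def)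
      then show ?thesis
        using min[OF that] \<open>Q ! j = Q ! i\<close> by (auto simp: key_def)
    qed
    then have "{y \<in> {..<n}. key y < key j} = {i}"
      using \<open>i < n\<close> by auto
    then show ?thesis
      using r(3)[OF \<open>j < n\<close>] by simp
  qed
  ultimately show ?thesis
    using that r(1) by blast
qed

lemma cone_subset_Vsys_equation:
  assumes TS: "T \<subseteq> {..<n}" "S \<subseteq> {..<n}" and "\<rho> \<in> component_ranks n T S"
  shows "cone l n \<rho> \<subseteq> Vsys l n {(T, S)}"
proof
  fix Q assume Q: "Q \<in> cone l n \<rho>"
  have "tval Q T = tval Q S"
    using \<open>\<rho> \<in> component_ranks n T S\<close>
    unfolding component_ranks_def common_bottom_perms_def split_bottom_perms_def
  proof (elim UnE imageE CollectE conjE bexE)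
    fix k assume "\<rho> k = 0" "k \<in> T \<inter> S"
    then show ?thesis
      using tval_cone[OF Q TS(1), of k] tval_cone[OF Q TS(2), of k] by simp
  next
    fix p i j assume p: "\<rho> = merge_bottom p" "p permutes {..<n}" "i \<in> T - S" "j \<in> S - T"
      "p i = 0" "p j = 1"
    have "Q \<in> cone l n p" "Q ! i = Q ! j"
      using Q p TS cone_merge_bottom[OF p(2), of i j l] by auto
    moreover have "p j \<le> p x" if "x \<in> S" for x
    proof -
      have "x \<noteq> i"
        using that p(3) by auto
      then have "p x \<noteq> 0"
        using p(5) permutes_eq_iff[OF p(2), of x i] by simp
      then show ?thesis
        using p(6) by simp
    qed
    ultimately show ?thesis
      using tval_cone[OF _ TS(1) p(3)[THEN DiffD1], of Q] tval_cone[OF _ TS(2) p(4)[THEN DiffD1], of Q] p(5)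
      by simp
  qed
  then show "Q \<in> Vsys l n {(T, S)}"
    using Q by (simp add: Vsys_def cone_def)
qed

lemma mem_cones_if_common_bottom:
  assumes "Q \<in> pts l n" "k \<in> T \<inter> S" "k < n" "\<And>x. x < n \<Longrightarrow> Q ! k \<le> Q ! x"
  shows "Q \<in> \<Union> (cone l n ` component_ranks n T S)"
proof -
  obtain r where r: "r permutes {..<n}" "\<And>x y. x < n \<Longrightarrow> y < n \<Longrightarrow> r x \<le> r y \<Longrightarrow> Q ! x \<le> Q ! y"
    "r k = 0"
    using sorting_permutation[OF assms(3,3,4) refl] by metis
  then have "r \<in> component_ranks n T S"
    using assms(2) by (auto simp: component_ranks_def common_bottom_perms_def)
  moreover have "Q \<in> cone l n r"
    using assms(1) r(2) by (simp add: cone_def)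
  ultimately show ?thesis
    by blast
qed

lemma mem_cones_if_split_bottom:
  assumes "Q \<in> pts l n" "i \<in> T - S" "j \<in> S - T" "i < n" "j < n"
    and "\<And>x. x < n \<Longrightarrow> Q ! i \<le> Q ! x" "Q ! j = Q ! i"
  shows "Q \<in> \<Union> (cone l n ` component_ranks n T S)"
proof -
  have "i \<noteq> j"
    using assms(2,3) by auto
  then obtain r where r: "r permutes {..<n}" "\<And>x y. x < n \<Longrightarrow> y < n \<Longrightarrow> r x \<le> r y \<Longrightarrow> Q ! x \<le> Q ! y"
    "r i = 0" "r j = 1"
    using sorting_permutation[OF assms(4-7)] by metis
  then have "merge_bottom r \<in> component_ranks n T S"
    using assms(2,3) by (auto simp: component_ranks_def split_bottom_perms_def)
  moreover have "Q \<in> cone l n (merge_bottom r)"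
    using cone_merge_bottom[OF r(1) assms(4,5) r(3,4)] assms(1,7) r(2) by (simp add: cone_def)
  ultimately show ?thesis
    by blast
qed

lemma Vsys_equation_subset_cones:
  assumes "(T, S) \<in> Eqn n"
  shows "Vsys l n {(T, S)} \<subseteq> \<Union> (cone l n ` component_ranks n T S)"
proof
  have TS: "T \<subseteq> {..<n}" "S \<subseteq> {..<n}" "T \<noteq> {}" "S \<noteq> {}" "T \<union> S = {..<n}"
    using assms by (auto simp: Eqn_def alleqs_def)
  fix Q assume "Q \<in> Vsys l n {(T, S)}"
  then have Q: "Q \<in> pts l n" "tval Q T = tval Q S"
    by (auto simp: Vsys_def)
  obtain t where t: "t \<in> T" "\<And>x. x \<in> T \<Longrightarrow> Q ! t \<le> Q ! x"
    using obtain_argmin[OF TS(3), of "\<lambda>x. Q ! x"] by blast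
  obtain s where s: "s \<in> S" "\<And>x. x \<in> S \<Longrightarrow> Q ! s \<le> Q ! x"
    using obtain_argmin[OF TS(4), of "\<lambda>x. Q ! x"] by blast
  have "finite T" "finite S"
    using TS(1,2) by (auto intro: finite_subset)
  then have "Q ! t = Q ! s"
    using Q(2) tval_eq_nth[of T t Q] tval_eq_nth[of S s Q] t s by simp
  then have min: "Q ! t \<le> Q ! x" "Q ! s \<le> Q ! x" if "x < n" for x
    using t(2) s(2) TS(5) that by force+
  have "t < n" "s < n"
    using t(1) s(1) TS(1,2) by auto
  consider "t \<in> S" | "s \<in> T" | "t \<in> T - S" "s \<in> S - T"
    using t(1) s(1) by blast
  then show "Q \<in> \<Union> (cone l n ` component_ranks n T S)"
  proof cases
    case 1
    then show ?thesis
      using mem_cones_if_common_bottom[OF Q(1) _ \<open>t < n\<close> min(1)] t(1) by blast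
  next
    case 2
    then show ?thesis
      using mem_cones_if_common_bottom[OF Q(1) _ \<open>s < n\<close> min(2)] s(1) by blast
  next
    case 3
    then show ?thesis
      using mem_cones_if_split_bottom[OF Q(1) _ _ \<open>t < n\<close> \<open>s < n\<close> min(1)] \<open>Q ! t = Q ! s\<close> by simp
  qed
qed

section \<open>Uniqueness of the irreducible decomposition\<close>

lemma algebraic_Int:
  assumes "algebraic l n Y" "algebraic l n Z"
  shows "algebraic l n (Y \<inter> Z)"
proof -
  obtain A B where "A \<subseteq> alleqs n" "Y = Vsys l n A" "B \<subseteq> alleqs n" "Z = Vsys l n B"
    using assms unfolding algebraic_def by blast
  then have "A \<union> B \<subseteq> alleqs n" "Y \<inter> Z = Vsys l n (A \<union> B)"
    by (auto simp: Vsys_def)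
  then show ?thesis
    unfolding algebraic_def by blast
qed

lemma irreducible_alg_subset_Union:
  assumes Z': "irreducible_alg l n Z'" and "finite C" "\<forall>Z\<in>C. algebraic l n Z" "Z' \<subseteq> \<Union>C"
  shows "\<exists>Z\<in>C. Z' \<subseteq> Z"
proof -
  have "\<forall>W\<in>(\<lambda>Z. Z' \<inter> Z) ` C. algebraic l n W"
    using assms algebraic_Int irreducible_alg_def by auto
  moreover have "Z' = \<Union> ((\<lambda>Z. Z' \<inter> Z) ` C)"
    using \<open>Z' \<subseteq> \<Union>C\<close> by blast
  ultimately have "Z' \<in> (\<lambda>Z. Z' \<inter> Z) ` C"
    using Z' \<open>finite C\<close> unfolding irreducible_alg_def by blast
  then show ?thesis
    by blast
qed

definition irredundant_decomposition :: "nat \<Rightarrow> nat \<Rightarrow> nat list set \<Rightarrow> nat list set set \<Rightarrow> bool" where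
  "irredundant_decomposition l n Y C \<longleftrightarrow> finite C \<and> (\<forall>Z\<in>C. irreducible_alg l n Z) \<and> \<Union>C = Y \<and>
     (\<forall>Z1\<in>C. \<forall>Z2\<in>C. Z1 \<noteq> Z2 \<longrightarrow> \<not> Z1 \<subseteq> Z2)"

lemma irredundant_decomposition_subset:
  assumes "irredundant_decomposition l n Y C" and "irredundant_decomposition l n Y C'"
  shows "C' \<subseteq> C"
proof
  have C: "finite C" "\<forall>Z\<in>C. irreducible_alg l n Z" "\<Union>C = Y"
    and C': "finite C'" "\<forall>Z\<in>C'. irreducible_alg l n Z" "\<Union>C' = Y"
      "\<forall>Z1\<in>C'. \<forall>Z2\<in>C'. Z1 \<noteq> Z2 \<longrightarrow> \<not> Z1 \<subseteq> Z2"
    using assms unfolding irredundant_decomposition_def by simp_all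
  have alg: "\<forall>Z\<in>C. algebraic l n Z" "\<forall>Z\<in>C'. algebraic l n Z"
    using C(2) C'(2) unfolding irreducible_alg_def by simp_all
  fix Z' assume "Z' \<in> C'"
  then have "Z' \<subseteq> \<Union>C"
    using C(3) C'(3) by auto
  then obtain Z where Z: "Z \<in> C" "Z' \<subseteq> Z"
    using irreducible_alg_subset_Union[OF C'(2)[rule_format, OF \<open>Z' \<in> C'\<close>] C(1) alg(1)] by blast
  then have "Z \<subseteq> \<Union>C'"
    using C(3) C'(3) by auto
  then obtain Z'' where Z'': "Z'' \<in> C'" "Z \<subseteq> Z''"
    using irreducible_alg_subset_Union[OF C(2)[rule_format, OF Z(1)] C'(1) alg(2)] by blast
  then have "Z' = Z''"
    using C'(4) \<open>Z' \<in> C'\<close> Z(2) by blast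
  then show "Z' \<in> C"
    using Z Z'' by auto
qed

lemma irr_components_eqI:
  assumes "irredundant_decomposition l n Y C"
  shows "irr_components l n Y = C"
  unfolding irr_components_def irredundant_decomposition_def[symmetric]
proof (rule the_equality)
  fix C' assume "irredundant_decomposition l n Y C'"
  then show "C' = C"
    using irredundant_decomposition_subset assms by blast
qed (fact assms)

section \<open>Counting the components\<close>

lemma permutes_map_point_eq_image:
  assumes "a \<in> X" "b \<in> X"
  shows "{q. q permutes X \<and> q a = b} = (\<circ>) (Transposition.transpose a b) ` {p. p permutes X - {a}}"
proof -
  let ?t = "Transposition.transpose a b"
  have t: "?t permutes X"
    by (rule permutes_swap_id[OF assms])
  have tt: "?t \<circ> (?t \<circ> q) = q" for q
    by (simp add: comp_assoc[symmetric])
  have iff: "q permutes X \<and> q a = b \<longleftrightarrow> ?t \<circ> q permutes X - {a}" for q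
  proof
    assume q: "q permutes X \<and> q a = b"
    have "?t \<circ> q permutes X"
      using q t by (simp add: permutes_compose)
    moreover have "(?t \<circ> q) x = x" if "x \<in> X - (X - {a})" for x
      using q that by simp
    ultimately show "?t \<circ> q permutes X - {a}"
      by (rule permutes_superset)
  next
    assume tq: "?t \<circ> q permutes X - {a}"
    have "q permutes X"
      using permutes_compose[OF permutes_subset[OF tq Diff_subset] t] unfolding tt .
    moreover have "?t (q a) = a"
      using permutes_not_in[OF tq] by simp
    then have "q a = b"
      by (metis transpose_involutory transpose_apply_first)
    ultimately show "q permutes X \<and> q a = b"
      by simp
  qed
  show ?thesis
  proof (intro equalityI subsetI)
    fix q assume "q \<in> {q. q permutes X \<and> q a = b}"
    then have "?t \<circ> q \<in> {p. p permutes X - {a}}"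
      using iff by simp
    then show "q \<in> (\<circ>) ?t ` {p. p permutes X - {a}}"
      using tt by (metis image_eqI)
  next
    fix q assume "q \<in> (\<circ>) ?t ` {p. p permutes X - {a}}"
    then obtain p where p: "p permutes X - {a}" "q = ?t \<circ> p"
      by blast
    then have "?t \<circ> q = p"
      using tt[of p] by simp
    then show "q \<in> {q. q permutes X \<and> q a = b}"
      using iff[of q] p(1) by simp
  qed
qed

lemma inj_comp_transpose: "inj ((\<circ>) (Transposition.transpose a b))"
proof (rule injI)
  fix p q assume "Transposition.transpose a b \<circ> p = Transposition.transpose a b \<circ> q"
  then have "Transposition.transpose a b \<circ> (Transposition.transpose a b \<circ> p) =
      Transposition.transpose a b \<circ> (Transposition.transpose a b \<circ> q)"
    by simp
  then show "p = q"
    by (simp add: comp_assoc[symmetric])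
qed

lemma card_permutes_map_point:
  assumes "finite X" "a \<in> X" "b \<in> X"
  shows "card {q. q permutes X \<and> q a = b} = fact (card X - 1)"
proof -
  have "card {q. q permutes X \<and> q a = b} = card {p. p permutes X - {a}}"
    unfolding permutes_map_point_eq_image[OF assms(2,3)]
    by (rule card_image[OF inj_on_subset[OF inj_comp_transpose subset_UNIV]])
  also have "\<dots> = fact (card X - 1)"
    using assms by (simp add: card_permutations)
  finally show ?thesis .
qed

lemma card_permutes_map_two_points:
  assumes "finite X" "a \<in> X" "b \<in> X" "c \<in> X" "d \<in> X" "a \<noteq> c" "b \<noteq> d"
  shows "card {q. q permutes X \<and> q a = b \<and> q c = d} = fact (card X - 2)"
proof -
  let ?t = "Transposition.transpose a b"
  have "{q. q permutes X \<and> q a = b \<and> q c = d} = {q \<in> {q. q permutes X \<and> q a = b}. q c = d}"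
    by auto
  also have "\<dots> = (\<circ>) ?t ` {p. p permutes X - {a} \<and> p c = ?t d}"
    unfolding permutes_map_point_eq_image[OF assms(2,3)] by (auto simp: transpose_eq_iff)
  finally have eq: "{q. q permutes X \<and> q a = b \<and> q c = d} = (\<circ>) ?t ` {p. p permutes X - {a} \<and> p c = ?t d}" .
  have "card {q. q permutes X \<and> q a = b \<and> q c = d} = card {p. p permutes X - {a} \<and> p c = ?t d}"
    unfolding eq by (rule card_image[OF inj_on_subset[OF inj_comp_transpose subset_UNIV]])
  also have "\<dots> = fact (card (X - {a}) - 1)"
    using assms by (intro card_permutes_map_point) (auto simp: transpose_def)
  also have "card (X - {a}) - 1 = card X - 2"
    using assms by simp
  finally show ?thesis .
qed

lemma card_common_bottom_perms:
  assumes "T \<subseteq> {..<n}" "S \<subseteq> {..<n}" "1 \<le> n"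
  shows "card (common_bottom_perms n T S) = card (T \<inter> S) * fact (n - 1)"
proof -
  have "common_bottom_perms n T S = (\<Union>k\<in>T \<inter> S. {q. q permutes {..<n} \<and> q k = 0})"
    unfolding common_bottom_perms_def by blast
  also have "card \<dots> = (\<Sum>k\<in>T \<inter> S. card {q. q permutes {..<n} \<and> q k = 0})"
  proof (rule card_UN_disjoint)
    show "finite (T \<inter> S)"
      using assms(1) by (auto intro: finite_subset)
    show "\<forall>k\<in>T \<inter> S. finite {q. q permutes {..<n} \<and> q k = 0}"
      by (auto intro: finite_subset[OF _ finite_permutations[of "{..<n}"]])
    show "\<forall>i\<in>T \<inter> S. \<forall>j\<in>T \<inter> S. i \<noteq> j \<longrightarrow>
        {q. q permutes {..<n} \<and> q i = 0} \<inter> {q. q permutes {..<n} \<and> q j = 0} = {}"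
      using permutes_eq_iff by fastforce
  qed
  also have "\<dots> = (\<Sum>k\<in>T \<inter> S. fact (n - 1))"
    using assms by (intro sum.cong refl) (auto simp: card_permutes_map_point)
  finally show ?thesis
    by simp
qed

lemma card_split_bottom_perms:
  assumes "T \<subseteq> {..<n}" "S \<subseteq> {..<n}" "2 \<le> n"
  shows "card (split_bottom_perms n T S) = card (T - S) * card (S - T) * fact (n - 2)"
proof -
  let ?A = "\<lambda>(i, j). {q. q permutes {..<n} \<and> q i = 0 \<and> q j = 1}"
  have "split_bottom_perms n T S = (\<Union>x\<in>(T - S) \<times> (S - T). ?A x)"
    unfolding split_bottom_perms_def by auto
  also have "card \<dots> = (\<Sum>x\<in>(T - S) \<times> (S - T). card (?A x))"
  proof (rule card_UN_disjoint)
    show "finite ((T - S) \<times> (S - T))"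
      using assms(1,2) by (auto intro: finite_subset)
    show "\<forall>x\<in>(T - S) \<times> (S - T). finite (?A x)"
      by (auto intro: finite_subset[OF _ finite_permutations[of "{..<n}"]])
    show "\<forall>x\<in>(T - S) \<times> (S - T). \<forall>y\<in>(T - S) \<times> (S - T). x \<noteq> y \<longrightarrow> ?A x \<inter> ?A y = {}"
      using permutes_eq_iff by fastforce
  qed
  also have "\<dots> = (\<Sum>x\<in>(T - S) \<times> (S - T). fact (n - 2))"
  proof (intro sum.cong refl)
    fix x assume "x \<in> (T - S) \<times> (S - T)"
    then obtain i j where "x = (i, j)" "i \<in> T - S" "j \<in> S - T"
      by blast
    then show "card (?A x) = fact (n - 2)"
      using assms card_permutes_map_two_points[of "{..<n}" i 0 j 1] by auto
  qed
  finally show ?thesis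
    by (simp add: card_cartesian_product)
qed

lemma card_component_ranks:
  assumes "T \<subseteq> {..<n}" "S \<subseteq> {..<n}" "2 \<le> n"
  shows "card (component_ranks n T S) =
    card (T \<inter> S) * fact (n - 1) + card (T - S) * card (S - T) * fact (n - 2)"
proof -
  have "merge_bottom ` split_bottom_perms n T S \<subseteq> component_ranks n T S"
    "common_bottom_perms n T S \<subseteq> component_ranks n T S"
    by (auto simp: component_ranks_def)
  then have disjoint: "common_bottom_perms n T S \<inter> merge_bottom ` split_bottom_perms n T S = {}"
    using component_ranks_eq_if_coarser[OF _ _ assms(1,2) coarser_refl]
      not_coarser_merge_bottom_common[OF _ _ assms(1,2)] coarser_refl by blast
  have "inj_on merge_bottom (split_bottom_perms n T S)"
  proof (rule inj_onI)
    fix p q assume "p \<in> split_bottom_perms n T S" "q \<in> split_bottom_perms n T S"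
      "merge_bottom p = merge_bottom q"
    then show "p = q"
      using split_bottom_perms_eq_if_coarser[OF _ _ assms(1,2)] coarser_refl[of n "merge_bottom p"]
      by simp
  qed
  then have "card (merge_bottom ` split_bottom_perms n T S) = card (split_bottom_perms n T S)"
    by (rule card_image)
  then show ?thesis
    unfolding component_ranks_def
    using card_Un_disjoint[OF finite_component_ranks(1) finite_imageI[OF finite_component_ranks(2)] disjoint]
      card_common_bottom_perms[OF assms(1,2)] card_split_bottom_perms[OF assms] assms(3)
    by simp
qed

lemma cone_subset_cone_component_ranks_iff:
  assumes "\<rho> \<in> component_ranks n T S" "\<rho>' \<in> component_ranks n T S"
    and "T \<subseteq> {..<n}" "S \<subseteq> {..<n}" "2 \<le> n" "n \<le> l"
  shows "cone l n \<rho> \<subseteq> cone l n \<rho>' \<longleftrightarrow> \<rho> = \<rho>'"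
proof
  assume "cone l n \<rho> \<subseteq> cone l n \<rho>'"
  then show "\<rho> = \<rho>'"
    using cone_subset_cone_iff[OF component_ranks_less[OF assms(1,5,6)]]
      component_ranks_eq_if_coarser[OF assms(1-4)] by simp
qed simp

lemma irredundant_decomposition_Vsys_equation:
  assumes e: "(T, S) \<in> Eqn n" and "2 \<le> n" "n \<le> l"
  shows "irredundant_decomposition l n (Vsys l n {(T, S)}) (cone l n ` component_ranks n T S)"
proof -
  let ?R = "component_ranks n T S"
  have TS: "T \<subseteq> {..<n}" "S \<subseteq> {..<n}"
    using e by (auto simp: Eqn_def alleqs_def)
  have "\<Union> (cone l n ` ?R) = Vsys l n {(T, S)}"
    using cone_subset_Vsys_equation[OF TS] Vsys_equation_subset_cones[OF e] by blast
  moreover have "\<forall>Z\<in>cone l n ` ?R. irreducible_alg l n Z"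
    using irreducible_alg_cone[OF component_ranks_less[OF _ assms(2,3)]] by blast
  moreover have "\<forall>Z1\<in>cone l n ` ?R. \<forall>Z2\<in>cone l n ` ?R. Z1 \<noteq> Z2 \<longrightarrow> \<not> Z1 \<subseteq> Z2"
    using cone_subset_cone_component_ranks_iff[OF _ _ TS assms(2,3)] by blast
  ultimately show ?thesis
    unfolding irredundant_decomposition_def using finite_component_ranks(3) by simp
qed

lemma Irr_Vsys_equation:
  assumes e: "(T, S) \<in> Eqn n" and "2 \<le> n" "n \<le> l"
  shows "Irr l n (Vsys l n {(T, S)}) =
    card (T \<inter> S) * fact (n - 1) + card (T - S) * card (S - T) * fact (n - 2)"
proof -
  have TS: "T \<subseteq> {..<n}" "S \<subseteq> {..<n}"
    using e by (auto simp: Eqn_def alleqs_def)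
  have "Irr l n (Vsys l n {(T, S)}) = card (cone l n ` component_ranks n T S)"
    unfolding Irr_def irr_components_eqI[OF irredundant_decomposition_Vsys_equation[OF assms]] ..
  also have "\<dots> = card (component_ranks n T S)"
  proof (rule card_image, rule inj_onI)
    fix \<rho> \<rho>' assume "\<rho> \<in> component_ranks n T S" "\<rho>' \<in> component_ranks n T S"
      "cone l n \<rho> = cone l n \<rho>'"
    then show "\<rho> = \<rho>'"
      using cone_subset_cone_component_ranks_iff[OF _ _ TS assms(2,3), of \<rho> \<rho>'] by simp
  qed
  finally show ?thesis
    using card_component_ranks[OF TS \<open>2 \<le> n\<close>] by simp
qed

section \<open>Averaging over all equations\<close>

definition covering_pairs :: "nat \<Rightarrow> (nat set \<times> nat set) set" where
  "covering_pairs n = {(T, S). T \<subseteq> {..<n} \<and> S \<subseteq> {..<n} \<and> T \<union> S = {..<n}}"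

definition ternary :: "nat \<Rightarrow> (nat \<Rightarrow> nat) set" where
  "ternary n = {..<n} \<rightarrow>\<^sub>E {0, 1, 2}"

text \<open>Digit 0 means "only in T", 1 "only in S", 2 "in both".\<close>
definition pair_of_ternary :: "nat \<Rightarrow> (nat \<Rightarrow> nat) \<Rightarrow> nat set \<times> nat set" where
  "pair_of_ternary n f = ({i \<in> {..<n}. f i \<noteq> 1}, {i \<in> {..<n}. f i \<noteq> 0})"

lemma bij_betw_pair_of_ternary: "bij_betw (pair_of_ternary n) (ternary n) (covering_pairs n)"
proof (rule bij_betw_imageI)
  show "inj_on (pair_of_ternary n) (ternary n)"
  proof (rule inj_onI)
    fix f g assume f: "f \<in> ternary n" and g: "g \<in> ternary n"
      and eq: "pair_of_ternary n f = pair_of_ternary n g"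
    show "f = g"
    proof (rule PiE_ext[OF f[unfolded ternary_def] g[unfolded ternary_def]])
      fix i assume "i \<in> {..<n}"
      then have "f i \<noteq> 1 \<longleftrightarrow> g i \<noteq> 1" "f i \<noteq> 0 \<longleftrightarrow> g i \<noteq> 0"
        using eq unfolding pair_of_ternary_def by blast+
      moreover have "f i \<in> {0, 1, 2}" "g i \<in> {0, 1, 2}"
        using PiE_mem[OF f[unfolded ternary_def] \<open>i \<in> {..<n}\<close>]
          PiE_mem[OF g[unfolded ternary_def] \<open>i \<in> {..<n}\<close>] by simp_all
      ultimately show "f i = g i"
        by auto
    qed
  qed
  show "pair_of_ternary n ` ternary n = covering_pairs n"
  proof (intro equalityI subsetI)
    fix x assume "x \<in> pair_of_ternary n ` ternary n"
    then show "x \<in> covering_pairs n"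
      by (auto simp: pair_of_ternary_def covering_pairs_def)
  next
    fix x assume "x \<in> covering_pairs n"
    then obtain T S where x: "x = (T, S)" "T \<subseteq> {..<n}" "S \<subseteq> {..<n}" "T \<union> S = {..<n}"
      by (auto simp: covering_pairs_def)
    define f where "f = restrict (\<lambda>i. if i \<in> T \<inter> S then 2 else if i \<in> T then 0 else 1::nat) {..<n}"
    have "f \<in> ternary n"
      by (simp add: f_def ternary_def)
    moreover have "pair_of_ternary n f = x"
      using x by (auto simp: f_def pair_of_ternary_def)
    ultimately show "x \<in> pair_of_ternary n ` ternary n"
      by blast
  qed
qed

lemma PiE_Collect_fixed:
  assumes "K \<subseteq> A" "\<And>x. x \<in> K \<Longrightarrow> g x \<in> B"
  shows "{f \<in> A \<rightarrow>\<^sub>E B. \<forall>x\<in>K. f x = g x} = Pi\<^sub>E A (\<lambda>x. if x \<in> K then {g x} else B)"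
proof (intro equalityI subsetI)
  fix f assume "f \<in> {f \<in> A \<rightarrow>\<^sub>E B. \<forall>x\<in>K. f x = g x}"
  then show "f \<in> Pi\<^sub>E A (\<lambda>x. if x \<in> K then {g x} else B)"
    unfolding PiE_def Pi_def by auto
next
  fix f assume "f \<in> Pi\<^sub>E A (\<lambda>x. if x \<in> K then {g x} else B)"
  then show "f \<in> {f \<in> A \<rightarrow>\<^sub>E B. \<forall>x\<in>K. f x = g x}"
    using assms unfolding PiE_def Pi_def by (auto split: if_splits)
qed

lemma card_ternary_fixing:
  assumes "K \<subseteq> {..<n}" "\<And>x. x \<in> K \<Longrightarrow> g x \<in> {0, 1, 2}"
  shows "card {f \<in> ternary n. \<forall>x\<in>K. f x = g x} = 3 ^ (n - card K)"
proof -
  have "{f \<in> ternary n. \<forall>x\<in>K. f x = g x} = Pi\<^sub>E {..<n} (\<lambda>x. if x \<in> K then {g x} else {0, 1, 2})"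
    unfolding ternary_def by (rule PiE_Collect_fixed[OF assms])
  then have "card {f \<in> ternary n. \<forall>x\<in>K. f x = g x} =
      (\<Prod>x<n. card (if x \<in> K then {g x} else {0, 1, 2::nat}))"
    by (simp add: card_PiE)
  also have "\<dots> = (\<Prod>x<n. if x \<in> K then 1 else 3)"
    by (intro prod.cong) auto
  also have "\<dots> = 3 ^ card ({..<n} - K)"
    by (simp add: prod.If_cases Diff_eq)
  also have "card ({..<n} - K) = n - card K"
    using assms(1) by (simp add: card_Diff_subset finite_subset)
  finally show ?thesis .
qed

lemma sum_card_filter_swap:
  assumes "finite A" "finite B"
  shows "(\<Sum>a\<in>A. card {b \<in> B. P a b}) = (\<Sum>b\<in>B. card {a \<in> A. P a b})"
proof -
  have card_filter: "card {x \<in> X. Q x} = (\<Sum>x\<in>X. if Q x then 1 else 0)" if "finite X" for X Q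
    using that by (simp add: sum.inter_filter[symmetric])
  have "(\<Sum>a\<in>A. card {b \<in> B. P a b}) = (\<Sum>a\<in>A. \<Sum>b\<in>B. if P a b then 1 else 0)"
    using card_filter[OF assms(2)] by (rule sum.cong[OF refl])
  also have "\<dots> = (\<Sum>b\<in>B. \<Sum>a\<in>A. if P a b then 1 else 0)"
    by (rule sum.swap)
  also have "\<dots> = (\<Sum>b\<in>B. card {a \<in> A. P a b})"
    using card_filter[OF assms(1)] by (intro sum.cong[OF refl]) (rule sym)
  finally show ?thesis .
qed

lemma finite_ternary: "finite (ternary n)"
  by (simp add: ternary_def finite_PiE)

lemma sum_ternary_card_eq_2: "(\<Sum>f\<in>ternary n. card {i \<in> {..<n}. f i = 2}) = n * 3 ^ (n - 1)"
proof -
  have "(\<Sum>f\<in>ternary n. card {i \<in> {..<n}. f i = 2}) = (\<Sum>i<n. card {f \<in> ternary n. f i = 2})"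
    by (rule sum_card_filter_swap[OF finite_ternary finite_lessThan])
  also have "\<dots> = (\<Sum>i<n. 3 ^ (n - 1))"
  proof (rule sum.cong[OF refl])
    fix i assume "i \<in> {..<n}"
    then have "card {f \<in> ternary n. \<forall>x\<in>{i}. f x = 2} = 3 ^ (n - card {i})"
      by (intro card_ternary_fixing) auto
    then show "card {f \<in> ternary n. f i = 2} = 3 ^ (n - 1)"
      by simp
  qed
  finally show ?thesis
    by simp
qed

lemma card_ternary_eq_0_eq_1:
  assumes "i < n" "j < n"
  shows "card {f \<in> ternary n. f i = 0 \<and> f j = 1} = (if i = j then 0 else 3 ^ (n - 2))"
proof (cases "i = j")
  case True
  then have empty: "{f \<in> ternary n. f i = 0 \<and> f j = 1} = {}"
    by auto
  show ?thesis
    unfolding empty using True by simp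
next
  case False
  have "{f \<in> ternary n. f i = 0 \<and> f j = 1} = {f \<in> ternary n. \<forall>y\<in>{i, j}. f y = (if y = i then 0 else 1)}"
    using False by auto
  moreover have "card \<dots> = 3 ^ (n - card {i, j})"
    using assms by (intro card_ternary_fixing) auto
  ultimately show ?thesis
    using False by simp
qed

lemma sum_ternary_card_eq_0_times_card_eq_1:
  "(\<Sum>f\<in>ternary n. card {i \<in> {..<n}. f i = 0} * card {j \<in> {..<n}. f j = 1}) =
    n * (n - 1) * 3 ^ (n - 2)"
proof -
  let ?P = "{..<n} \<times> {..<n}"
  have "card {i \<in> {..<n}. f i = 0} * card {j \<in> {..<n}. f j = 1} =
      card {x \<in> ?P. f (fst x) = 0 \<and> f (snd x) = 1}" for f :: "nat \<Rightarrow> nat"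
  proof -
    have "{x \<in> ?P. f (fst x) = 0 \<and> f (snd x) = 1} = {i \<in> {..<n}. f i = 0} \<times> {j \<in> {..<n}. f j = 1}"
      by auto
    then show ?thesis
      by (simp add: card_cartesian_product)
  qed
  then have "(\<Sum>f\<in>ternary n. card {i \<in> {..<n}. f i = 0} * card {j \<in> {..<n}. f j = 1}) =
      (\<Sum>x\<in>?P. card {f \<in> ternary n. f (fst x) = 0 \<and> f (snd x) = 1})"
    using sum_card_filter_swap[OF finite_ternary, of ?P] by simp
  also have "\<dots> = (\<Sum>x\<in>?P. if fst x = snd x then 0 else 3 ^ (n - 2))"
  proof (rule sum.cong[OF refl])
    fix x assume "x \<in> ?P"
    then show "card {f \<in> ternary n. f (fst x) = 0 \<and> f (snd x) = 1} = (if fst x = snd x then 0 else 3 ^ (n - 2))"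
      by (intro card_ternary_eq_0_eq_1) auto
  qed
  also have "\<dots> = (\<Sum>i<n. \<Sum>j<n. if i = j then 0 else 3 ^ (n - 2))"
    by (simp add: sum.cartesian_product split_def)
  also have "\<dots> = (\<Sum>i<n. (n - 1) * 3 ^ (n - 2))"
  proof (rule sum.cong[OF refl])
    fix i assume "i \<in> {..<n}"
    have "(\<Sum>j<n. if i = j then 0 else 3 ^ (n - 2)) = (\<Sum>j\<in>{..<n} - {i}. (3::nat) ^ (n - 2))"
      by (rule sum.mono_neutral_cong_right) auto
    then show "(\<Sum>j<n. if i = j then 0 else 3 ^ (n - 2)) = (n - 1) * 3 ^ (n - 2)"
      using \<open>i \<in> {..<n}\<close> by simp
  qed
  finally show ?thesis
    by simp
qed

lemma card_ternary: "card (ternary n) = 3 ^ n"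
  by (simp add: ternary_def card_PiE numeral_3_eq_3)

lemma Eqn_eq_covering_pairs: "Eqn n = covering_pairs n - {({}, {..<n}), ({..<n}, {})}"
  by (auto simp: Eqn_def alleqs_def covering_pairs_def)

lemma finite_covering_pairs: "finite (covering_pairs n)"
  using bij_betw_finite[OF bij_betw_pair_of_ternary] finite_ternary by simp

lemma card_covering_pairs: "card (covering_pairs n) = 3 ^ n"
  using bij_betw_same_card[OF bij_betw_pair_of_ternary] card_ternary by simp

lemma card_Eqn:
  assumes "1 \<le> n"
  shows "card (Eqn n) = 3 ^ n - 2"
proof -
  have "{({}, {..<n}), ({..<n}, {})} \<subseteq> covering_pairs n"
    by (auto simp: covering_pairs_def)
  moreover have "{..<n} \<noteq> ({} :: nat set)"
    using assms by (auto simp: lessThan_empty_iff)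
  then have "card {({}, {..<n}), ({..<n}, {} :: nat set)} = 2"
    by simp
  ultimately show ?thesis
    unfolding Eqn_eq_covering_pairs
    using finite_covering_pairs card_covering_pairs by (simp add: card_Diff_subset)
qed

lemma sum_Eqn_component_counts:
  assumes "2 \<le> n"
  shows "(\<Sum>(T, S)\<in>Eqn n. card (T \<inter> S) * fact (n - 1) + card (T - S) * card (S - T) * fact (n - 2))
    = 4 * fact n * 3 ^ (n - 2)"
    (is "(\<Sum>(T, S)\<in>Eqn n. ?c T S) = _")
proof -
  have "(\<Sum>(T, S)\<in>Eqn n. ?c T S) = (\<Sum>(T, S)\<in>covering_pairs n. ?c T S)"
    using finite_covering_pairs unfolding Eqn_eq_covering_pairs by (intro sum.mono_neutral_left) auto
  also have "\<dots> = (\<Sum>f\<in>ternary n. case pair_of_ternary n f of (T, S) \<Rightarrow> ?c T S)"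
    by (rule sum.reindex_bij_betw[OF bij_betw_pair_of_ternary, symmetric])
  also have "\<dots> = (\<Sum>f\<in>ternary n. card {i \<in> {..<n}. f i = 2} * fact (n - 1)
      + card {i \<in> {..<n}. f i = 0} * card {j \<in> {..<n}. f j = 1} * fact (n - 2))"
  proof (rule sum.cong[OF refl])
    fix f assume "f \<in> ternary n"
    then have "f i \<in> {0, 1, 2}" if "i < n" for i
      using that by (auto simp: ternary_def PiE_iff)
    then have "{i \<in> {..<n}. f i \<noteq> 1} \<inter> {i \<in> {..<n}. f i \<noteq> 0} = {i \<in> {..<n}. f i = 2}"
      by fastforce
    moreover have "{i \<in> {..<n}. f i \<noteq> 1} - {i \<in> {..<n}. f i \<noteq> 0} = {i \<in> {..<n}. f i = 0}"
      "{i \<in> {..<n}. f i \<noteq> 0} - {i \<in> {..<n}. f i \<noteq> 1} = {j \<in> {..<n}. f j = 1}"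
      by auto
    ultimately show "(case pair_of_ternary n f of (T, S) \<Rightarrow> ?c T S) =
        card {i \<in> {..<n}. f i = 2} * fact (n - 1)
        + card {i \<in> {..<n}. f i = 0} * card {j \<in> {..<n}. f j = 1} * fact (n - 2)"
      by (simp only: pair_of_ternary_def prod.case)
  qed
  also have "\<dots> = n * 3 ^ (n - 1) * fact (n - 1) + n * (n - 1) * 3 ^ (n - 2) * fact (n - 2)"
    by (simp only: sum.distrib sum_distrib_right[symmetric] sum_ternary_card_eq_2
        sum_ternary_card_eq_0_times_card_eq_1)
  also have "\<dots> = 4 * fact n * 3 ^ (n - 2)"
  proof -
    obtain m where m: "n = m + 2"
      using assms by (metis add.commute le_Suc_ex)
    show ?thesis
      unfolding m by (simp add: fact_Suc algebra_simps)
  qed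
  finally show ?thesis .
qed

theorem mainTheorem6:
  fixes n l :: nat
  assumes "2 \<le> n" and "n \<le> l"
  shows "(\<Sum>e\<in>Eqn n. real (Irr l n (Vsys l n {e}))) / real (card (Eqn n))
           = 4 * fact n * 3 ^ (n - 2) / (3 ^ n - 2)"
proof -
  have "(\<Sum>e\<in>Eqn n. Irr l n (Vsys l n {e})) =
      (\<Sum>(T, S)\<in>Eqn n. card (T \<inter> S) * fact (n - 1) + card (T - S) * card (S - T) * fact (n - 2))"
  proof (rule sum.cong[OF refl])
    fix e assume "e \<in> Eqn n"
    then show "Irr l n (Vsys l n {e}) = (case e of (T, S) \<Rightarrow>
        card (T \<inter> S) * fact (n - 1) + card (T - S) * card (S - T) * fact (n - 2))"
      using Irr_Vsys_equation[OF _ assms] by (cases e) simp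
  qed
  also have "\<dots> = 4 * fact n * 3 ^ (n - 2)"
    by (rule sum_Eqn_component_counts[OF assms(1)])
  finally have "real (\<Sum>e\<in>Eqn n. Irr l n (Vsys l n {e})) = real (4 * fact n * 3 ^ (n - 2))"
    by (rule arg_cong)
  moreover have "(3::nat) ^ 1 \<le> 3 ^ n"
    using assms(1) by (intro power_increasing) auto
  then have "real (card (Eqn n)) = 3 ^ n - 2"
    using card_Eqn assms(1) by (simp add: of_nat_diff)
  ultimately show ?thesis
    by simp
qed

end
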